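(* For all $N\ge1$ and $1\le k\le N$, $\left(\tfrac kN\right)^r e^{-r^2/k}\le E[X_{k,N}]\le \left(\tfrac kN\right)^r e^{r/k}$.
   Context: Fix $r\in(0,1)$. Multitype Yule process: at time $0$ a single individual of type $1$ is born; no deaths; each individual independently gives birth at rate $1$; a newborn has, independently, its parent's type with probability $1-r$ and otherwise a brand-new type. Individuals are numbered in order of birth; if the $k$-th individual born has a type different from its parent, that type is called type $k$. $T_N$ is the time the population reaches size $N$; $X_{k,N}$ is the fraction of individuals at time $T_N$ with type in $\{1,\dots,k\}$. *)

theory Defs
  imports "HOL-Probability.Probability"
begin

text \<open>Multitype Yule process, observed at the birth times.  A population
of n individuals is encoded as the list ts of their types, where ts ! i is
the type of the (i+1)-th individual born.  At each birth event of the Yule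
process (all individuals reproduce at rate 1, no deaths) the parent is
uniformly distributed among the current individuals; the newborn, which
is individual number (length ts + 1), is independently a mutant with
probability r and then gets the new type (length ts + 1); otherwise it
inherits its parent's type.\<close>

definition yule_step :: "real \<Rightarrow> nat list \<Rightarrow> nat list pmf" where
  "yule_step r ts =
     bind_pmf (pmf_of_set {..<length ts}) (\<lambda>p.
     bind_pmf (bernoulli_pmf r) (\<lambda>m.
     return_pmf (ts @ [if m then length ts + 1 else ts ! p])))"

text \<open>Law of the population after n births, i.e. at time T_(n+1)
(the single initial individual has type 1).\<close>
fun yule_pop :: "real \<Rightarrow> nat \<Rightarrow> nat list pmf" where
  "yule_pop r 0 = return_pmf [1]"
| "yule_pop r (Suc n) = bind_pmf (yule_pop r n) (yule_step r)"

definition yule_frac :: "nat \<Rightarrow> nat list \<Rightarrow> real" where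
  "yule_frac k ts = real (length (filter (\<lambda>t. 1 \<le> t \<and> t \<le> k) ts)) / real (length ts)"

text \<open>E[X_{k,N}]: the population at time T_N is the one after N-1 births.\<close>
definition yule_EX :: "real \<Rightarrow> nat \<Rightarrow> nat \<Rightarrow> real" where
  "yule_EX r k N = measure_pmf.expectation (yule_pop r (N - 1)) (yule_frac k)"

end

theory Submission
  imports Defs
begin

text \<open>Let C(k, ts) be the number of individuals with type in {1..k}.  As long as the population
has at least k members, a newborn can only enter {1..k} by inheriting such a type, which happens
with probability (1 - r) C/n in a population of size n.  Hence E[C] grows by the factor
1 + (1 - r)/n at every birth, and since C = k when the population first reaches size k,
E[X_{k,N}] is the product of the factors 1 - r/j over k < j \<le> N.  Bernoulli's inequality for
the exponent r \<in> [0, 1] squeezes each factor between ((j - 1)/j)^r and (j/(j + 1))^r, and the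
two products telescope to (k/N)^r and ((k + 1)/(N + 1))^r.  In particular the lower bound
holds even without the factor exp(-r^2/k).\<close>

lemma expectation_cong_set_pmf:
  fixes f g :: "'a \<Rightarrow> real"
  assumes "\<And>x. x \<in> set_pmf p \<Longrightarrow> f x = g x"
  shows "measure_pmf.expectation p f = measure_pmf.expectation p g"
  using assms by (intro integral_cong_AE) (auto simp: AE_measure_pmf_iff)

lemma prod_greaterThanAtMost_Suc:
  fixes f :: "nat \<Rightarrow> 'a::comm_monoid_mult"
  assumes "k \<le> n"
  shows "(\<Prod>j\<in>{k<..Suc n}. f j) = (\<Prod>j\<in>{k<..n}. f j) * f (Suc n)"
  using assms by (simp flip: atLeastSucAtMost_greaterThanAtMost)

lemma powr_le_one_plus_mult:
  fixes x r :: real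
  assumes "0 < x" "0 \<le> r" "r \<le> 1"
  shows "x powr r \<le> 1 + r * (x - 1)"
  using Youngs_inequality_0[of r "1 - r" x 1] assms by (simp add: algebra_simps)

lemma powr_le_one_minus_div:
  fixes j r :: real
  assumes "1 < j" "0 \<le> r" "r \<le> 1"
  shows "((j - 1) / j) powr r \<le> 1 - r / j"
  using powr_le_one_plus_mult[of "(j - 1) / j" r] assms by (simp add: field_simps)

lemma one_minus_div_le_powr:
  fixes j r :: real
  assumes "0 < j" "0 \<le> r" "r \<le> 1"
  shows "1 - r / j \<le> (j / (j + 1)) powr r"
proof -
  let ?B = "((j + 1) / j) powr r"
  have B_pos: "0 < ?B"
    using assms by simp
  have "(1 - r / j) * ?B \<le> 1"
  proof (cases "0 \<le> 1 - r / j")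
    case True
    have "?B \<le> 1 + r / j"
      using powr_le_one_plus_mult[of "(j + 1) / j" r] assms by (simp add: field_simps)
    then have "(1 - r / j) * ?B \<le> (1 - r / j) * (1 + r / j)"
      using True by (rule mult_left_mono)
    also have "\<dots> \<le> 1"
      by (simp add: algebra_simps)
    finally show ?thesis .
  next
    case False
    then have "(1 - r / j) * ?B \<le> 0"
      using B_pos by (intro mult_nonpos_nonneg) auto
    then show ?thesis
      by simp
  qed
  moreover have "(j / (j + 1)) powr r = 1 / ?B"
    using assms by (simp add: powr_divide)
  ultimately show ?thesis
    using B_pos by (simp add: pos_le_divide_eq)
qed

lemma powr_le_prod_one_minus_div:
  fixes r :: real
  assumes "0 \<le> r" "r \<le> 1" "1 \<le> k" "k \<le> N"
  shows "(real k / real N) powr r \<le> (\<Prod>j\<in>{k<..N}. 1 - r / real j)"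
  using assms(4)
proof (induction N rule: dec_induct)
  case base
  then show ?case
    using assms by simp
next
  case (step n)
  have "(real k / real (Suc n)) powr r = (real k / real n) powr r * (real n / real (Suc n)) powr r"
    using step.hyps assms by (simp flip: powr_mult)
  also have "\<dots> \<le> (\<Prod>j\<in>{k<..n}. 1 - r / real j) * (1 - r / real (Suc n))"
  proof (rule mult_mono)
    show "(real n / real (Suc n)) powr r \<le> 1 - r / real (Suc n)"
      using powr_le_one_minus_div[of "real (Suc n)" r] step.hyps assms by simp
    show "0 \<le> (\<Prod>j\<in>{k<..n}. 1 - r / real j)"
      using assms by (intro prod_nonneg) (auto simp: field_simps)
  qed (use step.IH in auto)
  also have "\<dots> = (\<Prod>j\<in>{k<..Suc n}. 1 - r / real j)"
    using step.hyps by (simp add: prod_greaterThanAtMost_Suc)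
  finally show ?case .
qed

lemma prod_one_minus_div_le_powr:
  fixes r :: real
  assumes "0 \<le> r" "r \<le> 1" "k \<le> N"
  shows "(\<Prod>j\<in>{k<..N}. 1 - r / real j) \<le> ((real k + 1) / (real N + 1)) powr r"
  using assms(3)
proof (induction N rule: dec_induct)
  case base
  then show ?case
    by simp
next
  case (step n)
  have "(\<Prod>j\<in>{k<..Suc n}. 1 - r / real j)
      = (\<Prod>j\<in>{k<..n}. 1 - r / real j) * (1 - r / real (Suc n))"
    using step.hyps by (simp add: prod_greaterThanAtMost_Suc)
  also have "\<dots>
      \<le> ((real k + 1) / (real n + 1)) powr r * (real (Suc n) / (real (Suc n) + 1)) powr r"
  proof (rule mult_mono)
    show "1 - r / real (Suc n) \<le> (real (Suc n) / (real (Suc n) + 1)) powr r"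
      using one_minus_div_le_powr[of "real (Suc n)" r] assms by simp
    show "0 \<le> 1 - r / real (Suc n)"
      using assms by (simp add: field_simps)
  qed (use step.IH in auto)
  also have "\<dots> = ((real k + 1) / (real n + 1) * (real (Suc n) / (real (Suc n) + 1))) powr r"
    by (rule powr_mult[symmetric])
  also have "(real k + 1) / (real n + 1) * (real (Suc n) / (real (Suc n) + 1))
      = (real k + 1) / (real (Suc n) + 1)"
    by (simp add: add.commute)
  finally show ?case .
qed

lemma powr_Suc_ratio_le_exp:
  fixes r :: real
  assumes "0 \<le> r" "r \<le> 1" "0 < k" "0 < N"
  shows "((real k + 1) / (real N + 1)) powr r \<le> (real k / real N) powr r * exp (r / real k)"
proof -
  have "((real k + 1) / (real N + 1)) powr r \<le> ((real k + 1) / real N) powr r"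
    using assms by (intro powr_mono2 divide_left_mono) auto
  also have "(real k + 1) / real N = real k / real N * (1 + 1 / real k)"
    using assms by (simp add: field_simps)
  also have "(real k / real N * (1 + 1 / real k)) powr r
      = (real k / real N) powr r * (1 + 1 / real k) powr r"
    by (rule powr_mult)
  also have "\<dots> \<le> (real k / real N) powr r * exp (r / real k)"
  proof (rule mult_left_mono)
    have "(1 + 1 / real k) powr r \<le> 1 + r / real k"
      using powr_le_one_plus_mult[of "1 + 1 / real k" r] assms by (simp add: add_pos_nonneg)
    also have "\<dots> \<le> exp (r / real k)"
      by (rule exp_ge_add_one_self)
    finally show "(1 + 1 / real k) powr r \<le> exp (r / real k)" .
  qed simp
  finally show ?thesis .
qed

definition yule_count :: "nat \<Rightarrow> nat list \<Rightarrow> real" where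
  "yule_count k ts = real (length (filter (\<lambda>t. 1 \<le> t \<and> t \<le> k) ts))"

lemma yule_frac_eq_count: "yule_frac k ts = yule_count k ts / real (length ts)"
  by (simp add: yule_frac_def yule_count_def)

lemma yule_count_snoc:
  "yule_count k (ts @ [t]) = yule_count k ts + (if 1 \<le> t \<and> t \<le> k then 1 else 0)"
  by (simp add: yule_count_def)

lemma yule_count_eq_sum:
  "yule_count k ts = (\<Sum>i<length ts. if 1 \<le> ts ! i \<and> ts ! i \<le> k then 1 else 0)"
  by (induction ts rule: rev_induct) (simp_all add: yule_count_snoc nth_append yule_count_def)

lemma set_pmf_yule_step:
  assumes "ts \<noteq> []"
  shows "set_pmf (yule_step r ts) \<subseteq> {ts @ [t] | t. t = length ts + 1 \<or> t \<in> set ts}"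
  using assms by (auto simp: yule_step_def lessThan_empty_iff)

lemma set_pmf_yule_pop:
  assumes "ts \<in> set_pmf (yule_pop r n)"
  shows "length ts = Suc n \<and> set ts \<subseteq> {1..Suc n}"
  using assms
proof (induction n arbitrary: ts)
  case 0
  then show ?case by simp
next
  case (Suc n)
  then obtain us where us: "us \<in> set_pmf (yule_pop r n)" "ts \<in> set_pmf (yule_step r us)"
    by auto
  with Suc.IH have len: "length us = Suc n" and types: "set us \<subseteq> {1..Suc n}"
    by auto
  with us(2) obtain t where "ts = us @ [t]" "t = length us + 1 \<or> t \<in> set us"
    using set_pmf_yule_step[of us r] by fastforce
  with len types show ?case
    by auto
qed

lemma finite_set_pmf_yule_pop: "finite (set_pmf (yule_pop r n))"
proof (rule finite_subset)
  show "set_pmf (yule_pop r n) \<subseteq> {ts. set ts \<subseteq> {1..Suc n} \<and> length ts = Suc n}"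
    using set_pmf_yule_pop by blast
qed (simp add: finite_lists_length_eq)

lemma expectation_yule_step_count:
  assumes "0 \<le> r" "r \<le> 1" "0 < length ts" "k \<le> length ts"
  shows "measure_pmf.expectation (yule_step r ts) (yule_count k)
       = yule_count k ts * (1 + (1 - r) / length ts)"
proof -
  let ?n = "length ts"
  let ?inherits = "\<lambda>p. if 1 \<le> ts ! p \<and> ts ! p \<le> k then 1 else 0 :: real"
  \<comment> \<open>a mutant gets the type n + 1 > k, so only inheritance can add to the count\<close>
  have newborn: "measure_pmf.expectation
      (bernoulli_pmf r \<bind> (\<lambda>m. return_pmf (ts @ [if m then ?n + 1 else ts ! p]))) (yule_count k)
    = yule_count k ts + (1 - r) * ?inherits p" for p
    using assms by (subst pmf_expectation_bind[of UNIV])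
      (auto simp: UNIV_bool yule_count_snoc algebra_simps)
  have "measure_pmf.expectation (yule_step r ts) (yule_count k)
      = (\<Sum>p<?n. (yule_count k ts + (1 - r) * ?inherits p) / ?n)"
    unfolding yule_step_def using assms
    by (subst pmf_expectation_bind_pmf_of_set) (auto simp: newborn field_simps)
  also have "\<dots> = yule_count k ts + (1 - r) * (\<Sum>p<?n. ?inherits p) / ?n"
    using assms by (simp add: sum_divide_distrib[symmetric] sum.distrib sum_distrib_left
        add_divide_distrib)
  also have "(\<Sum>p<?n. ?inherits p) = yule_count k ts"
    by (rule yule_count_eq_sum[symmetric])
  also have "yule_count k ts + (1 - r) * yule_count k ts / ?n
      = yule_count k ts * (1 + (1 - r) / ?n)"
    by (simp add: algebra_simps)
  finally show ?thesis .
qed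

lemma expectation_yule_pop_count_Suc:
  assumes "0 \<le> r" "r \<le> 1" "k \<le> Suc n"
  shows "measure_pmf.expectation (yule_pop r (Suc n)) (yule_count k)
       = measure_pmf.expectation (yule_pop r n) (yule_count k) * (1 + (1 - r) / Suc n)"
proof -
  let ?p = "yule_pop r n"
  have finite_step: "finite (set_pmf (yule_step r ts))" if "ts \<in> set_pmf ?p" for ts
    using that by (intro finite_subset[OF _ finite_set_pmf_yule_pop[of r "Suc n"]]) auto
  have "measure_pmf.expectation (yule_pop r (Suc n)) (yule_count k)
      = (\<Sum>ts\<in>set_pmf ?p. pmf ?p ts * measure_pmf.expectation (yule_step r ts) (yule_count k))"
    by (simp add: pmf_expectation_bind[OF finite_set_pmf_yule_pop finite_step])
  also have "\<dots> = (\<Sum>ts\<in>set_pmf ?p. pmf ?p ts * yule_count k ts) * (1 + (1 - r) / Suc n)"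
    unfolding sum_distrib_right
  proof (intro sum.cong refl)
    fix ts
    assume "ts \<in> set_pmf ?p"
    then have "length ts = Suc n"
      using set_pmf_yule_pop by blast
    then show "pmf ?p ts * measure_pmf.expectation (yule_step r ts) (yule_count k)
        = pmf ?p ts * yule_count k ts * (1 + (1 - r) / Suc n)"
      using assms by (simp add: expectation_yule_step_count)
  qed
  also have "(\<Sum>ts\<in>set_pmf ?p. pmf ?p ts * yule_count k ts)
      = measure_pmf.expectation ?p (yule_count k)"
    by (simp add: integral_measure_pmf_real[OF finite_set_pmf_yule_pop] mult.commute)
  finally show ?thesis .
qed

lemma expectation_yule_pop_count_eq_size:
  assumes "Suc n \<le> k"
  shows "measure_pmf.expectation (yule_pop r n) (yule_count k) = Suc n"
proof -
  have "yule_count k ts = Suc n" if "ts \<in> set_pmf (yule_pop r n)" for ts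
  proof -
    have "length ts = Suc n" "set ts \<subseteq> {1..k}"
      using set_pmf_yule_pop[OF that] assms by auto
    moreover from this have "filter (\<lambda>t. 1 \<le> t \<and> t \<le> k) ts = ts"
      by (subst filter_id_conv) auto
    ultimately show ?thesis
      by (simp add: yule_count_def)
  qed
  then have "measure_pmf.expectation (yule_pop r n) (yule_count k)
      = measure_pmf.expectation (yule_pop r n) (\<lambda>_. Suc n)"
    by (rule expectation_cong_set_pmf)
  then show ?thesis
    by simp
qed

lemma expectation_yule_pop_count:
  assumes "0 \<le> r" "r \<le> 1" "1 \<le> k" "k \<le> Suc n"
  shows "measure_pmf.expectation (yule_pop r n) (yule_count k)
       = Suc n * (\<Prod>j\<in>{k<..Suc n}. 1 - r / real j)"
  using assms(4)
proof (induction n)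
  case 0
  with assms(3) have "k = 1"
    by simp
  then show ?case
    by (simp add: yule_count_def)
next
  case (Suc n)
  show ?case
  proof (cases "k = Suc (Suc n)")
    case True
    then show ?thesis
      by (simp add: expectation_yule_pop_count_eq_size del: yule_pop.simps)
  next
    case False
    with Suc.prems have k: "k \<le> Suc n"
      by simp
    have "measure_pmf.expectation (yule_pop r (Suc n)) (yule_count k)
        = Suc n * (\<Prod>j\<in>{k<..Suc n}. 1 - r / real j) * (1 + (1 - r) / Suc n)"
      by (simp only: expectation_yule_pop_count_Suc[OF assms(1,2) k] Suc.IH[OF k])
    also have "\<dots> = Suc (Suc n) * (\<Prod>j\<in>{k<..Suc n}. 1 - r / real j) * (1 - r / Suc (Suc n))"
      by (simp add: field_simps)
    also have "\<dots> = Suc (Suc n) * (\<Prod>j\<in>{k<..Suc (Suc n)}. 1 - r / real j)"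
      using k by (simp add: prod_greaterThanAtMost_Suc)
    finally show ?thesis .
  qed
qed

lemma yule_EX_eq_prod:
  assumes "0 \<le> r" "r \<le> 1" "1 \<le> k" "k \<le> N"
  shows "yule_EX r k N = (\<Prod>j\<in>{k<..N}. 1 - r / real j)"
proof -
  let ?p = "yule_pop r (N - 1)"
  have N: "Suc (N - 1) = N"
    using assms by simp
  have "yule_EX r k N = measure_pmf.expectation ?p (\<lambda>ts. yule_count k ts / N)"
    unfolding yule_EX_def
  proof (rule expectation_cong_set_pmf)
    fix ts
    assume "ts \<in> set_pmf ?p"
    then have "length ts = N"
      using set_pmf_yule_pop N by metis
    then show "yule_frac k ts = yule_count k ts / N"
      by (simp add: yule_frac_eq_count)
  qed
  also have "\<dots> = measure_pmf.expectation ?p (yule_count k) / N"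
    by simp
  also have "\<dots> = (\<Prod>j\<in>{k<..N}. 1 - r / real j)"
    using expectation_yule_pop_count[of r k "N - 1"] assms N by simp
  finally show ?thesis .
qed

theorem lemma3p2:
  fixes r :: real and N k :: nat
  assumes "0 < r" and "r < 1" and "1 \<le> N" and "1 \<le> k" and "k \<le> N"
  shows "(real k / real N) powr r * exp (- (r ^ 2) / real k) \<le> yule_EX r k N
       \<and> yule_EX r k N \<le> (real k / real N) powr r * exp (r / real k)"
proof
  have EX: "yule_EX r k N = (\<Prod>j\<in>{k<..N}. 1 - r / real j)"
    using assms by (simp add: yule_EX_eq_prod)
  have "(real k / real N) powr r * exp (- (r ^ 2) / real k) \<le> (real k / real N) powr r"
    by (simp add: mult_left_le)
  also have "\<dots> \<le> yule_EX r k N"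
    using powr_le_prod_one_minus_div[of r k N] assms EX by simp
  finally show "(real k / real N) powr r * exp (- (r ^ 2) / real k) \<le> yule_EX r k N" .
  have "yule_EX r k N \<le> ((real k + 1) / (real N + 1)) powr r"
    using prod_one_minus_div_le_powr[of r k N] assms EX by simp
  also have "\<dots> \<le> (real k / real N) powr r * exp (r / real k)"
    using powr_Suc_ratio_le_exp[of r k N] assms by simp
  finally show "yule_EX r k N \<le> (real k / real N) powr r * exp (r / real k)" .
qed

end
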